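(* Let $1\le k\le d$ be integers and let $(p_m)_{m\in\mathbb Z}$ be the sequence defined below. Then for every integer $m\ge0$, $$p_m=\sum_{\ell=0}^{m}(-1)^\ell(d-k)^{m-\ell}\binom{d-k+\ell-1}{\ell}.$$ In particular, for an integer $\mu\ge0$, the numbers $t_m:=p_{\mu-m}$ ($0\le m\le\mu$) are the unique solution of $t_\mu=1$ and $t_m=\sum_{j=m+1}^{\mu}t_j\,(j-m-1)\binom{d-k+1}{j-m}$ for $0\le m<\mu$.
   Context: Sequence: $p_m=0$ for $m<0$, $p_0=1$, and $p_m=\sum_{\ell=1}^{m}(\ell-1)\binom{d-k+1}{\ell}p_{m-\ell}$ for $m\ge1$. Conventions: $0^0=1$; for integers $r$ and $\ell\ge0$, $\binom{r}{\ell}=r(r-1)\cdots(r-\ell+1)/\ell!$ (so $\binom{r}{0}=1$), and $\binom{r}{\ell}=0$ for $\ell<0$. *)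

theory Defs
  imports Complex_Main
begin

text \<open>Binomial coefficients with integer upper argument r are the generalized
  binomials gchoose (r(r-1)...(r-l+1)/l!), evaluated in the reals
  (the library provides gchoose only for division rings such as real;
  all values involved are integers).\<close>

fun pseq :: "int \<Rightarrow> int \<Rightarrow> nat \<Rightarrow> real" where
  "pseq d k 0 = 1"
| "pseq d k (Suc n) =
     (\<Sum>l\<in>{1..Suc n}. (real l - 1) * (real_of_int (d - k + 1) gchoose l) * pseq d k (Suc n - l))"

definition pval :: "int \<Rightarrow> int \<Rightarrow> int \<Rightarrow> real" where
  "pval d k m = (if m < 0 then 0 else pseq d k (nat m))"

end

theory Submission
  imports Defs "HOL-Computational_Algebra.Formal_Power_Series"
begin

text \<open>Put a = d - k. The recurrence says that the generating function P of p satisfies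
  P * (1 - \<Sum>l\<ge>1. (l - 1) C(a + 1, l) X^l) = 1, and the bracket factors as (1 + X)^a (1 - a X).
  Hence P = (1 + X)^(-a) / (1 - a X), and expanding with C(-a, l) = (-1)^l C(a + l - 1, l)
  gives the closed form. Read backwards from \<mu>, the recurrence determines t(\<mu> - 1), \<dots>, t(0)
  one at a time, which gives the uniqueness statement.\<close>

lemma fps_convolution_recurrence_mult:
  fixes f w :: "nat \<Rightarrow> 'a::comm_ring_1"
  assumes f0: "f 0 = 1"
    and f_Suc: "\<And>n. f (Suc n) = (\<Sum>l=1..Suc n. w l * f (Suc n - l))"
  shows "Abs_fps f * Abs_fps (\<lambda>n. if n = 0 then 1 else - w n) = 1"
  (is "_ * Abs_fps ?c = _")
proof (rule fps_ext)
  fix n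
  show "fps_nth (Abs_fps f * Abs_fps ?c) n = fps_nth 1 n"
  proof (cases n)
    case (Suc m)
    have "fps_nth (Abs_fps f * Abs_fps ?c) n = (\<Sum>l=0..Suc m. ?c l * f (Suc m - l))"
      unfolding mult.commute[of "Abs_fps f"] fps_mult_nth Suc by simp
    also have "\<dots> = ?c 0 * f (Suc m) + (\<Sum>l=1..Suc m. ?c l * f (Suc m - l))"
      by (simp add: sum.atLeast_Suc_atMost)
    also have "(\<Sum>l=1..Suc m. ?c l * f (Suc m - l)) = - (\<Sum>l=1..Suc m. w l * f (Suc m - l))"
      unfolding sum_negf[symmetric] by (rule sum.cong) auto
    finally show ?thesis by (simp add: Suc f_Suc)
  qed (simp add: f0)
qed

lemma gbinomial_Suc_diff_mult:
  fixes a :: "'a::field_char_0"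
  shows "(a gchoose Suc n) - a * (a gchoose n) = - of_nat n * ((a + 1) gchoose Suc n)"
  using gbinomial_mult_1[of a n] gbinomial_Suc_Suc[of a n] by (simp add: algebra_simps)

lemma fps_binomial_mult_one_minus:
  fixes a :: "'a::field_char_0"
  shows "fps_binomial a * (1 - fps_const a * fps_X)
         = Abs_fps (\<lambda>n. if n = 0 then 1 else - ((of_nat n - 1) * ((a + 1) gchoose n)))"
proof (rule fps_ext)
  fix n
  show "fps_nth (fps_binomial a * (1 - fps_const a * fps_X)) n
        = fps_nth (Abs_fps (\<lambda>n. if n = 0 then 1 else - ((of_nat n - 1) * ((a + 1) gchoose n)))) n"
  proof (cases n)
    case (Suc m)
    have "fps_nth (fps_binomial a * (1 - fps_const a * fps_X)) n = (a gchoose Suc m) - a * (a gchoose m)"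
      by (simp add: Suc algebra_simps)
    then show ?thesis by (simp add: Suc gbinomial_Suc_diff_mult)
  qed simp
qed

lemma fps_geometric_mult_one_minus:
  "Abs_fps (\<lambda>n. a ^ n) * (1 - fps_const a * fps_X) = (1 :: 'a::comm_ring_1 fps)"
proof (rule fps_ext)
  fix n
  show "fps_nth (Abs_fps (\<lambda>n. a ^ n) * (1 - fps_const a * fps_X)) n = fps_nth (1 :: 'a fps) n"
    by (cases n) (simp_all add: algebra_simps)
qed

lemma gbinomial_recurrence_closed_form:
  fixes a :: "'a::field_char_0"
  assumes "f 0 = 1"
    and "\<And>n. f (Suc n) = (\<Sum>l=1..Suc n. (of_nat l - 1) * ((a + 1) gchoose l) * f (Suc n - l))"
  shows "f m = (\<Sum>l=0..m. (-1) ^ l * a ^ (m - l) * ((a + of_nat l - 1) gchoose l))"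
proof -
  define L where "L = 1 - fps_const a * fps_X"
  have inverse_f: "Abs_fps f * (fps_binomial a * L) = 1"
    unfolding L_def fps_binomial_mult_one_minus by (rule fps_convolution_recurrence_mult[OF assms])
  have "Abs_fps f = Abs_fps f * (fps_binomial a * fps_binomial (- a)) * (Abs_fps (\<lambda>n. a ^ n) * L)"
    unfolding L_def fps_geometric_mult_one_minus by (simp flip: fps_binomial_add_mult)
  also have "\<dots> = Abs_fps f * (fps_binomial a * L) * (fps_binomial (- a) * Abs_fps (\<lambda>n. a ^ n))"
    by (simp only: ac_simps)
  finally have "Abs_fps f = fps_binomial (- a) * Abs_fps (\<lambda>n. a ^ n)"
    unfolding inverse_f by simp
  then have "f m = fps_nth (fps_binomial (- a) * Abs_fps (\<lambda>n. a ^ n)) m"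
    by (metis fps_nth_Abs_fps)
  also have "\<dots> = (\<Sum>l=0..m. (-1) ^ l * a ^ (m - l) * ((a + of_nat l - 1) gchoose l))"
    unfolding fps_mult_nth fps_binomial_nth fps_nth_Abs_fps
    by (rule sum.cong) (simp_all add: gbinomial_negated_upper[of "- a"] algebra_simps)
  finally show ?thesis .
qed

lemma convolution_recurrence_reversed:
  fixes f w :: "nat \<Rightarrow> 'a::comm_semiring_1"
  assumes f_Suc: "\<And>n. f (Suc n) = (\<Sum>l=1..Suc n. w l * f (Suc n - l))"
    and "m < \<mu>"
  shows "f (\<mu> - m) = (\<Sum>j=m+1..\<mu>. f (\<mu> - j) * w (j - m))"
proof -
  obtain n where \<mu>: "\<mu> = Suc n + m"
    using \<open>m < \<mu>\<close> less_iff_Suc_add by auto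
  have "{m+1..\<mu>} = {1+m..Suc n+m}"
    using \<mu> by simp
  then have "(\<Sum>j=m+1..\<mu>. f (\<mu> - j) * w (j - m)) = (\<Sum>l=1..Suc n. f (\<mu> - (l + m)) * w (l + m - m))"
    using sum.shift_bounds_cl_nat_ivl[of "\<lambda>j. f (\<mu> - j) * w (j - m)" 1 m "Suc n"] by simp
  also have "\<dots> = (\<Sum>l=1..Suc n. w l * f (Suc n - l))"
    using \<mu> by (intro sum.cong) (simp_all add: mult.commute)
  finally show ?thesis
    using \<mu> f_Suc by simp
qed

lemma convolution_recurrence_reversed_iff:
  fixes f w t :: "nat \<Rightarrow> 'a::comm_semiring_1"
  assumes f0: "f 0 = 1"
    and f_Suc: "\<And>n. f (Suc n) = (\<Sum>l=1..Suc n. w l * f (Suc n - l))"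
  shows "(t \<mu> = 1 \<and> (\<forall>m<\<mu>. t m = (\<Sum>j=m+1..\<mu>. t j * w (j - m))))
         \<longleftrightarrow> (\<forall>m\<le>\<mu>. t m = f (\<mu> - m))"
proof
  assume t: "t \<mu> = 1 \<and> (\<forall>m<\<mu>. t m = (\<Sum>j=m+1..\<mu>. t j * w (j - m)))"
  have "t m = f (\<mu> - m)" if "m \<le> \<mu>" for m
    using that
  proof (induction "\<mu> - m" arbitrary: m rule: less_induct)
    case less
    show ?case
    proof (cases "m = \<mu>")
      case True
      then show ?thesis using t f0 by simp
    next
      case False
      then have "m < \<mu>" using less.prems by simp
      then have "t m = (\<Sum>j=m+1..\<mu>. t j * w (j - m))"
        using t by blast
      also have "\<dots> = (\<Sum>j=m+1..\<mu>. f (\<mu> - j) * w (j - m))"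
      proof (intro sum.cong refl)
        fix j
        assume "j \<in> {m+1..\<mu>}"
        then have "\<mu> - j < \<mu> - m" and "j \<le> \<mu>"
          by auto
        then show "t j * w (j - m) = f (\<mu> - j) * w (j - m)"
          using less.hyps[of j] by simp
      qed
      also have "\<dots> = f (\<mu> - m)"
        using convolution_recurrence_reversed[OF f_Suc \<open>m < \<mu>\<close>] by simp
      finally show ?thesis .
    qed
  qed
  then show "\<forall>m\<le>\<mu>. t m = f (\<mu> - m)" by blast
next
  assume t: "\<forall>m\<le>\<mu>. t m = f (\<mu> - m)"
  have "t m = (\<Sum>j=m+1..\<mu>. t j * w (j - m))" if "m < \<mu>" for m
  proof -
    have "(\<Sum>j=m+1..\<mu>. t j * w (j - m)) = (\<Sum>j=m+1..\<mu>. f (\<mu> - j) * w (j - m))"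
      using t by (intro sum.cong) simp_all
    with convolution_recurrence_reversed[OF f_Suc that] that t show ?thesis by simp
  qed
  then show "t \<mu> = 1 \<and> (\<forall>m<\<mu>. t m = (\<Sum>j=m+1..\<mu>. t j * w (j - m)))"
    using t f0 by simp
qed

lemma pseq_closed_form:
  "pseq d k m = (\<Sum>l=0..m. (-1) ^ l * real_of_int (d - k) ^ (m - l)
                             * (real_of_int (d - k + int l - 1) gchoose l))"
proof -
  have "pseq d k (Suc n) = (\<Sum>l=1..Suc n. (of_nat l - 1) * ((real_of_int (d - k) + 1) gchoose l)
                                           * pseq d k (Suc n - l))" for n
    by (simp only: pseq.simps of_int_add of_int_1)
  then show ?thesis
    using gbinomial_recurrence_closed_form[of "pseq d k" "real_of_int (d - k)" m] by simp
qed

lemma pseq_reversed_recurrence_iff: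
  "(t \<mu> = 1 \<and>
    (\<forall>m<\<mu>. t m = (\<Sum>j=m+1..\<mu>. t j * (real j - real m - 1)
                                   * (real_of_int (d - k + 1) gchoose (j - m)))))
   \<longleftrightarrow> (\<forall>m\<le>\<mu>. t m = pseq d k (\<mu> - m))"
proof -
  let ?w = "\<lambda>l. (real l - 1) * (real_of_int (d - k + 1) gchoose l)"
  have "(\<Sum>j=m+1..\<mu>. t j * (real j - real m - 1) * (real_of_int (d - k + 1) gchoose (j - m)))
        = (\<Sum>j=m+1..\<mu>. t j * ?w (j - m))" for m
    by (intro sum.cong) (simp_all add: of_nat_diff)
  then show ?thesis
    using convolution_recurrence_reversed_iff[of "pseq d k" ?w t \<mu>] by simp
qed

lemma pval_of_nat_diff: "m \<le> \<mu> \<Longrightarrow> pval d k (int \<mu> - int m) = pseq d k (\<mu> - m)"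
  by (simp add: pval_def flip: of_nat_diff)

theorem lemma3:
  fixes d k :: int
  assumes "1 \<le> k" and "k \<le> d"
  shows "(\<forall>m::nat. pval d k (int m) =
            (\<Sum>l=0..m. (-1) ^ l * real_of_int (d - k) ^ (m - l)
                         * (real_of_int (d - k + int l - 1) gchoose l)))
       \<and> (\<forall>(\<mu>::nat) (t::nat \<Rightarrow> real).
            (t \<mu> = 1 \<and>
             (\<forall>m<\<mu>. t m = (\<Sum>j=m+1..\<mu>. t j * (real j - real m - 1)
                                        * (real_of_int (d - k + 1) gchoose (j - m)))))
            \<longleftrightarrow> (\<forall>m\<le>\<mu>. t m = pval d k (int \<mu> - int m)))"
proof (intro conjI allI)
  fix m :: nat
  show "pval d k (int m) =
          (\<Sum>l=0..m. (-1) ^ l * real_of_int (d - k) ^ (m - l)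
                       * (real_of_int (d - k + int l - 1) gchoose l))"
    using pseq_closed_form by (simp add: pval_def)
next
  fix \<mu> :: nat and t :: "nat \<Rightarrow> real"
  have "(\<forall>m\<le>\<mu>. t m = pval d k (int \<mu> - int m)) \<longleftrightarrow> (\<forall>m\<le>\<mu>. t m = pseq d k (\<mu> - m))"
    by (simp add: pval_of_nat_diff)
  then show "(t \<mu> = 1 \<and>
              (\<forall>m<\<mu>. t m = (\<Sum>j=m+1..\<mu>. t j * (real j - real m - 1)
                                         * (real_of_int (d - k + 1) gchoose (j - m)))))
             \<longleftrightarrow> (\<forall>m\<le>\<mu>. t m = pval d k (int \<mu> - int m))"
    using pseq_reversed_recurrence_iff by simp
qed

end
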